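(* Let $l \ge 3$ be an integer and $d = 4l$. For $T\subseteq[d]$ write $e_T\in\{0,1\}^d$ for the indicator vector of $T$. Let the demonstration set $D$ consist of all vectors $e_{T_1\cup T_2}$ with $T_1\subseteq[2l]$, $|T_1| = l-1$, and $T_2\subseteq\{2l+1,\dots,4l\}$, $|T_2| = 1$ (the entire support of the demonstration distribution). Let the query $e_q = e_T$ with $T$ drawn uniformly among subsets of $[2l]$ of size $l$. Let $\theta\in\mathbb R^d$ have i.i.d. entries uniform on $[0,1]$, independent of $e_q$, and let $K=2$. Let $L$ be the expected prediction loss $\mathbb E\big[\langle \theta - E^\dagger E\theta, e_q\rangle^2\big]$ when the two demonstrations (rows of $E$) are selected by TopK, and $L'$ the same quantity when they are selected by TopK-Div with hyperparameter $\alpha$, where the expectation is over $\theta$, $e_q$, and the random tie-breaking in the selection. Then $L > L'$ whenever $1 - 1/l \le \alpha < 1$.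
   Context: Cosine similarity: $\mathrm{Sim}(u,v) = \langle u,v\rangle/(\|u\|\|v\|)$. For a vector $e$ and a nonempty finite set $S$ of vectors, $\mathrm{Div}(e,S) = 1 - \frac{1}{|S|}\sum_{s\in S}\mathrm{Sim}(e,s)$, and $\mathrm{Div}(e,\emptyset)=0$. TopK selection: choose the $K$ elements of $D$ with the largest $\mathrm{Sim}(\cdot,e_q)$, ties broken uniformly at random. TopK-Div selection with parameter $\alpha$: start with $S=\emptyset$ and, while $|S|<K$, add an element $e\in D\setminus S$ maximizing $\alpha\,\mathrm{Sim}(e,e_q) + (1-\alpha)\mathrm{Div}(e,S)$ (ties broken uniformly at random); in particular the first selected element maximizes similarity to $e_q$. Given the selected demonstrations $e_{j_1},\dots,e_{j_K}$, $E = [e_{j_1},\dots,e_{j_K}]^\top\in\mathbb R^{K\times d}$, $E^\dagger$ is its Moore–Penrose pseudoinverse, the model's prediction on query $e_q$ is $\langle e_q, E^\dagger E\theta\rangle$ (the min-norm interpolating linear regression solution), the true label is $\langle\theta,e_q\rangle$, and the prediction loss is $\langle \theta - E^\dagger E\theta, e_q\rangle^2$. *)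

theory Defs
  imports "HOL-Probability.Probability" "Jordan_Normal_Form.Matrix"
begin

text \<open>Vectors in R^d are Jordan_Normal_Form vectors of dimension d (indices 0..d-1,
  corresponding to coordinates 1..d).\<close>

definition vnorm :: "real vec \<Rightarrow> real" where
  "vnorm u = sqrt (scalar_prod u u)"

definition Sim :: "real vec \<Rightarrow> real vec \<Rightarrow> real" where
  "Sim u v = scalar_prod u v / (vnorm u * vnorm v)"

definition Div :: "real vec \<Rightarrow> real vec set \<Rightarrow> real" where
  "Div e S = (if S = {} then 0 else 1 - (\<Sum>s\<in>S. Sim e s) / real (card S))"

definition indvec :: "nat \<Rightarrow> nat set \<Rightarrow> real vec" where
  "indvec d T = vec d (\<lambda>i. if i + 1 \<in> T then 1 else 0)"

definition pinv :: "real mat \<Rightarrow> real mat" where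
  "pinv A = (THE X. X \<in> carrier_mat (dim_col A) (dim_row A) \<and>
      A * X * A = A \<and> X * A * X = X \<and>
      transpose_mat (A * X) = A * X \<and> transpose_mat (X * A) = X * A)"

definition pred_loss :: "nat \<Rightarrow> real vec list \<Rightarrow> real vec \<Rightarrow> real vec \<Rightarrow> real" where
  "pred_loss d xs \<theta> q =
     (let E = mat_of_rows d xs in (scalar_prod (\<theta> - (pinv E * E) *\<^sub>v \<theta>) q)\<^sup>2)"

text \<open>TopK selection: uniformly random among all (ordered) choices of K distinct
  elements of D such that every chosen element is at least as similar to q as
  every unchosen one (i.e. top-K with uniformly random tie-breaking).\<close>
definition topk_sel :: "real vec set \<Rightarrow> nat \<Rightarrow> real vec \<Rightarrow> real vec list pmf" where
  "topk_sel D K q = pmf_of_set {xs. distinct xs \<and> length xs = K \<and> set xs \<subseteq> D \<and>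
       (\<forall>x\<in>set xs. \<forall>y\<in>D - set xs. Sim y q \<le> Sim x q)}"

definition div_score :: "real \<Rightarrow> real vec \<Rightarrow> real vec set \<Rightarrow> real vec \<Rightarrow> real" where
  "div_score \<alpha> q S e = \<alpha> * Sim e q + (1 - \<alpha>) * Div e S"

fun topkdiv_sel :: "real \<Rightarrow> real vec set \<Rightarrow> nat \<Rightarrow> real vec \<Rightarrow> real vec list pmf" where
  "topkdiv_sel \<alpha> D 0 q = return_pmf []"
| "topkdiv_sel \<alpha> D (Suc k) q =
     bind_pmf (topkdiv_sel \<alpha> D k q) (\<lambda>xs.
       map_pmf (\<lambda>e. xs @ [e])
         (pmf_of_set {e \<in> D - set xs. \<forall>e'\<in>D - set xs.
                div_score \<alpha> q (set xs) e' \<le> div_score \<alpha> q (set xs) e}))"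

definition theta_measure :: "nat \<Rightarrow> (nat \<Rightarrow> real) measure" where
  "theta_measure d = PiM {..<d} (\<lambda>_. uniform_measure lborel {0..1::real})"

definition expected_loss ::
  "nat \<Rightarrow> real vec pmf \<Rightarrow> (real vec \<Rightarrow> real vec list pmf) \<Rightarrow> real" where
  "expected_loss d Q sel =
     measure_pmf.expectation Q (\<lambda>q. measure_pmf.expectation (sel q) (\<lambda>xs.
        integral\<^sup>L (theta_measure d) (\<lambda>\<theta>. pred_loss d xs (vec d \<theta>) q)))"

definition demo_set :: "nat \<Rightarrow> real vec set" where
  "demo_set l = {indvec (4 * l) (T1 \<union> T2) | T1 T2.
       T1 \<subseteq> {1..2 * l} \<and> card T1 = l - 1 \<and> T2 \<subseteq> {2 * l + 1..4 * l} \<and> card T2 = 1}"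

definition query_dist :: "nat \<Rightarrow> real vec pmf" where
  "query_dist l = map_pmf (indvec (4 * l)) (pmf_of_set {T. T \<subseteq> {1..2 * l} \<and> card T = l})"

end

theory Submission
  imports Defs
begin

(* Encode a demonstration e_(T1 \<union> {j}) by its lower part T1 \<subseteq> [2l], |T1| = l - 1, and its upper
  coordinate j, and call it near the query T when T1 \<subseteq> T; near demonstrations are exactly those of
  maximal similarity (l - 1)/l, and there are more than two of them.
  For two rows a, b of equal norm n and overlap c < n the pseudoinverse is E^T (E E^T)^-1, so if the
  query has overlap s with both rows the loss is <\<theta>, q - s/(n + c) (a + b)>^2; averaging over \<theta>
  with E[\<theta>_i \<theta>_j] = 1/4 + [i = j]/12 gives a closed form in the overlaps.  For two near
  demonstrations it equals 1/12 if they differ in both T1 and j, and exceeds 1/12 otherwise.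
  TopK picks an arbitrary pair of near demonstrations, with positive probability a redundant one.
  TopK-Div picks a near demonstration first; since \<alpha> \<ge> 1 - 1/l > 1/2, the diversity term then
  forces a near demonstration that differs from it in both parts.  Hence L' = 1/12 < L. *)

lemma penrose_unique:
  fixes A X Y :: "real mat"
  assumes A: "A \<in> carrier_mat m n" and X: "X \<in> carrier_mat n m" and Y: "Y \<in> carrier_mat n m"
    and X1: "A * X * A = A" and X2: "X * A * X = X"
    and X3: "transpose_mat (A * X) = A * X" and X4: "transpose_mat (X * A) = X * A"
    and Y1: "A * Y * A = A" and Y2: "Y * A * Y = Y"
    and Y3: "transpose_mat (A * Y) = A * Y" and Y4: "transpose_mat (Y * A) = Y * A"
  shows "X = Y"
proof -
  have XA: "X * A \<in> carrier_mat n n" and YA: "Y * A \<in> carrier_mat n n"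
    and AX: "A * X \<in> carrier_mat m m" and AY: "A * Y \<in> carrier_mat m m"
    using A X Y by auto
  have "X * A = X * (A * Y * A)" using Y1 by simp
  also have "\<dots> = (X * A) * (Y * A)"
    using A X Y by (simp add: assoc_mult_mat[of _ n m _ n _ n])
  also have "\<dots> = transpose_mat ((X * A) * (Y * A))"
    using X4 calculation by metis
  also have "\<dots> = (Y * A) * (X * A)"
    using X4 Y4 by (simp add: transpose_mult[OF XA YA])
  also have "\<dots> = Y * (A * X * A)"
    using A X Y by (simp add: assoc_mult_mat[of _ n m _ n _ n])
  also have "\<dots> = Y * A" using X1 by simp
  finally have XA_YA: "X * A = Y * A" .
  have "A * X = (A * Y * A) * X" using Y1 by simp
  also have "\<dots> = (A * Y) * (A * X)"
    by (subst assoc_mult_mat[of "A * Y" m m A n X m]) (use A X Y in auto)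
  also have "\<dots> = transpose_mat ((A * Y) * (A * X))"
    using X3 calculation by metis
  also have "\<dots> = (A * X) * (A * Y)"
    using X3 Y3 by (simp add: transpose_mult[OF AY AX])
  also have "\<dots> = (A * X * A) * Y"
    by (subst assoc_mult_mat[of "A * X" m m A n Y m]) (use A X Y in auto)
  also have "\<dots> = A * Y" using X1 by simp
  finally have AX_AY: "A * X = A * Y" .
  have "X = X * A * X" using X2 by simp
  also have "\<dots> = X * (A * Y)"
    using A X Y AX_AY by (simp add: assoc_mult_mat[of _ n m _ n _ m])
  also have "\<dots> = (X * A) * Y"
    using A X Y by (simp add: assoc_mult_mat[of _ n m _ n _ m])
  also have "\<dots> = (Y * A) * Y" using XA_YA by simp
  also have "\<dots> = Y" using Y2 by simp
  finally show ?thesis .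
qed

lemma pinv_eqI:
  assumes "X \<in> carrier_mat (dim_col A) (dim_row A)"
    and "A * X * A = A" and "X * A * X = X"
    and "transpose_mat (A * X) = A * X" and "transpose_mat (X * A) = X * A"
  shows "pinv A = X"
  unfolding pinv_def
proof (rule the_equality)
  fix Y
  assume "Y \<in> carrier_mat (dim_col A) (dim_row A) \<and> A * Y * A = A \<and> Y * A * Y = Y \<and>
    transpose_mat (A * Y) = A * Y \<and> transpose_mat (Y * A) = Y * A"
  then show "Y = X"
    using penrose_unique[of A "dim_row A" "dim_col A" Y X] assms by auto
qed (use assms in auto)

lemma pinv_full_row_rank:
  fixes A G :: "real mat"
  assumes A: "A \<in> carrier_mat m n" and G: "G \<in> carrier_mat m m"
    and G_sym: "transpose_mat G = G" and G_inv: "A * transpose_mat A * G = 1\<^sub>m m"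
  shows "pinv A = transpose_mat A * G"
proof (rule pinv_eqI)
  let ?X = "transpose_mat A * G"
  have At: "transpose_mat A \<in> carrier_mat n m" using A by simp
  have X: "?X \<in> carrier_mat n m" using At G by simp
  have AX: "A * ?X = 1\<^sub>m m"
    using A At G G_inv by (metis assoc_mult_mat)
  show "?X \<in> carrier_mat (dim_col A) (dim_row A)" using A X by simp
  show "A * ?X * A = A" using A AX by simp
  show "?X * A * ?X = ?X" using A X AX by (metis assoc_mult_mat right_mult_one_mat)
  show "transpose_mat (A * ?X) = A * ?X" using AX by simp
  have "transpose_mat (?X * A) = transpose_mat A * (transpose_mat G * transpose_mat (transpose_mat A))"
    by (simp add: transpose_mult[OF X A] transpose_mult[OF At G])
  then show "transpose_mat (?X * A) = ?X * A"
    using G_sym by (simp add: assoc_mult_mat[OF At G A])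
qed

lemma pred_loss_full_row_rank:
  fixes d :: nat and xs :: "real vec list" and G :: "real mat"
  defines "E \<equiv> mat_of_rows d xs"
  assumes m: "length xs = m"
    and G: "G \<in> carrier_mat m m" and G_sym: "transpose_mat G = G"
    and G_inv: "E * transpose_mat E * G = 1\<^sub>m m"
    and \<theta>: "\<theta> \<in> carrier_vec d" and q: "q \<in> carrier_vec d"
  shows "pred_loss d xs \<theta> q = (scalar_prod \<theta> (q - transpose_mat E *\<^sub>v (G *\<^sub>v (E *\<^sub>v q))))\<^sup>2"
proof -
  have E: "E \<in> carrier_mat m d" unfolding E_def m[symmetric] by simp
  have Et: "transpose_mat E \<in> carrier_mat d m" using E by simp
  have EtG: "transpose_mat E * G \<in> carrier_mat d m" using Et G by simp
  have "(pinv E * E) *\<^sub>v \<theta> = (transpose_mat E * G) *\<^sub>v (E *\<^sub>v \<theta>)"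
    unfolding pinv_full_row_rank[OF E G G_sym G_inv] using assoc_mult_mat_vec[OF EtG E \<theta>] .
  also have "\<dots> = transpose_mat E *\<^sub>v (G *\<^sub>v (E *\<^sub>v \<theta>))"
    using E \<theta> by (simp add: assoc_mult_mat_vec[OF Et G])
  finally have P: "(pinv E * E) *\<^sub>v \<theta> = transpose_mat E *\<^sub>v (G *\<^sub>v (E *\<^sub>v \<theta>))" .
  have "scalar_prod (transpose_mat E *\<^sub>v (G *\<^sub>v (E *\<^sub>v \<theta>))) q
      = scalar_prod (G *\<^sub>v (E *\<^sub>v \<theta>)) (E *\<^sub>v q)"
    using E G \<theta> q by (simp add: transpose_vec_mult_scalar)
  also have "\<dots> = scalar_prod (E *\<^sub>v \<theta>) (G *\<^sub>v (E *\<^sub>v q))"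
    using transpose_vec_mult_scalar[OF G, of "E *\<^sub>v q" "E *\<^sub>v \<theta>"] E \<theta> q G_sym by simp
  also have "\<dots> = scalar_prod \<theta> (transpose_mat E *\<^sub>v (G *\<^sub>v (E *\<^sub>v q)))"
    using transpose_vec_mult_scalar[OF E \<theta>, of "G *\<^sub>v (E *\<^sub>v q)"] E Et G \<theta> q
    by (metis comm_scalar_prod mult_mat_vec_carrier)
  finally show ?thesis
    using E Et G \<theta> q unfolding pred_loss_def E_def[symmetric] Let_def P
    by (simp add: minus_scalar_prod_distrib scalar_prod_minus_distrib comm_scalar_prod[of q d])
qed

lemma pred_loss_two_rows:
  fixes a b q \<theta> :: "real vec"
  assumes carrier: "a \<in> carrier_vec d" "b \<in> carrier_vec d" "q \<in> carrier_vec d" "\<theta> \<in> carrier_vec d"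
    and norms: "scalar_prod a a = n" "scalar_prod b b = n" and overlap: "scalar_prod a b = c"
    and independent: "\<bar>c\<bar> < n"
    and query: "scalar_prod a q = s" "scalar_prod b q = s"
  shows "pred_loss d [a, b] \<theta> q = (scalar_prod \<theta> (q - (s / (n + c)) \<cdot>\<^sub>v (a + b)))\<^sup>2"
proof -
  let ?E = "mat_of_rows d [a, b]"
  define D where "D = n\<^sup>2 - c\<^sup>2"
  define p where "p = n / D"
  define r where "r = - c / D"
  define G where "G = mat 2 2 (\<lambda>(i, j). if i = j then p else r)"
  have "D \<noteq> 0" "n + c \<noteq> 0"
    using independent unfolding D_def by (auto simp: abs_less_iff power2_eq_square square_diff_square_factored)
  then have inverse: "n * p + c * r = 1" "c * p + n * r = 0" and projection: "p * s + r * s = s / (n + c)"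
    unfolding p_def r_def by (auto simp: field_simps) (auto simp: D_def power2_eq_square algebra_simps)
  have two: "{0..<2} = {0, 1 :: nat}" by auto
  have rows: "row ?E i = [a, b] ! i" if "i < 2" for i
    using that carrier by (auto simp: less_2_cases_iff)
  have gram: "?E * transpose_mat ?E = mat 2 2 (\<lambda>(i, j). if i = j then n else c)"
    by (rule eq_matI) (auto simp: rows less_2_cases_iff norms overlap comm_scalar_prod[OF carrier(2,1)])
  have G_inv: "?E * transpose_mat ?E * G = 1\<^sub>m 2"
    unfolding gram G_def using inverse
    by (intro eq_matI) (auto simp: scalar_prod_def two less_2_cases_iff algebra_simps)
  have G: "G \<in> carrier_mat 2 2" unfolding G_def by simp
  have G_sym: "transpose_mat G = G" unfolding G_def by (rule eq_matI) auto
  have "?E *\<^sub>v q = vec 2 (\<lambda>_. s)"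
    by (rule eq_vecI) (auto simp: rows less_2_cases_iff query)
  then have "G *\<^sub>v (?E *\<^sub>v q) = vec 2 (\<lambda>_. s / (n + c))"
    unfolding G_def using projection
    by (intro eq_vecI) (auto simp: scalar_prod_def two less_2_cases_iff)
  then have "transpose_mat ?E *\<^sub>v (G *\<^sub>v (?E *\<^sub>v q)) = (s / (n + c)) \<cdot>\<^sub>v (a + b)"
    using carrier by (intro eq_vecI) (auto simp: scalar_prod_def two less_2_cases_iff mat_of_rows_index algebra_simps)
  then show ?thesis
    using pred_loss_full_row_rank[OF _ G G_sym G_inv carrier(4,3)] by simp
qed

lemma integral_PiM_mult_coordinates:
  fixes M :: "real measure" and i j d :: nat
  assumes M: "prob_space M" and int1: "integrable M (\<lambda>x. x)" and int2: "integrable M (\<lambda>x. x\<^sup>2)"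
    and i: "i < d" and j: "j < d"
  shows "integrable (PiM {..<d} (\<lambda>_. M)) (\<lambda>\<theta>. \<theta> i * \<theta> j)"
    and "(\<integral>\<theta>. \<theta> i * \<theta> j \<partial>PiM {..<d} (\<lambda>_. M))
       = (if i = j then (\<integral>x. x\<^sup>2 \<partial>M) else (\<integral>x. x \<partial>M)\<^sup>2)"
proof -
  define f where "f k x = (if k = i then x else 1) * (if k = j then x else 1)" for k :: nat and x :: real
  have prod_f: "(\<Prod>k<d. f k (\<theta> k)) = \<theta> i * \<theta> j" for \<theta> :: "nat \<Rightarrow> real"
    using i j by (simp add: f_def prod.distrib)
  have f_cases: "f k = (if k = i \<and> k = j then (\<lambda>x. x\<^sup>2) else if k = i \<or> k = j then (\<lambda>x. x) else (\<lambda>_. 1))" for k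
    by (auto simp: f_def fun_eq_iff power2_eq_square)
  interpret M: prob_space M by (fact M)
  have int_f: "integrable M (f k)" for k
    using int1 int2 by (simp add: f_cases)
  interpret product_sigma_finite "\<lambda>_. M"
    unfolding product_sigma_finite_def using prob_space_imp_sigma_finite[OF M] by simp
  show "integrable (PiM {..<d} (\<lambda>_. M)) (\<lambda>\<theta>. \<theta> i * \<theta> j)"
    using product_integrable_prod[of "{..<d}" f] int_f by (simp add: prod_f)
  have "(\<integral>\<theta>. \<theta> i * \<theta> j \<partial>PiM {..<d} (\<lambda>_. M)) = (\<Prod>k<d. integral\<^sup>L M (f k))"
    using product_integral_prod[of "{..<d}" f] int_f by (simp add: prod_f)
  also have "\<dots> = (\<Prod>k<d. (if k = i then (if i = j then \<integral>x. x\<^sup>2 \<partial>M else \<integral>x. x \<partial>M) else 1)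
                        * (if k = j then (if i = j then 1 else \<integral>x. x \<partial>M) else 1))"
    by (intro prod.cong) (auto simp: f_cases M.prob_space)
  also have "\<dots> = (if i = j then (\<integral>x. x\<^sup>2 \<partial>M) else (\<integral>x. x \<partial>M)\<^sup>2)"
    using i j by (simp add: prod.distrib power2_eq_square)
  finally show "(\<integral>\<theta>. \<theta> i * \<theta> j \<partial>PiM {..<d} (\<lambda>_. M))
       = (if i = j then (\<integral>x. x\<^sup>2 \<partial>M) else (\<integral>x. x \<partial>M)\<^sup>2)" .
qed

lemma integral_PiM_square_linear_form:
  fixes M :: "real measure" and r :: "nat \<Rightarrow> real"
  defines "\<mu> \<equiv> \<integral>x. x \<partial>M" and "m \<equiv> \<integral>x. x\<^sup>2 \<partial>M"
  assumes M: "prob_space M" and "integrable M (\<lambda>x. x)" and "integrable M (\<lambda>x. x\<^sup>2)"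
  shows "(\<integral>\<theta>. (\<Sum>i<d. \<theta> i * r i)\<^sup>2 \<partial>PiM {..<d} (\<lambda>_. M))
     = (m - \<mu>\<^sup>2) * (\<Sum>i<d. (r i)\<^sup>2) + \<mu>\<^sup>2 * (\<Sum>i<d. r i)\<^sup>2"
proof -
  let ?P = "PiM {..<d} (\<lambda>_. M)"
  note moments = integral_PiM_mult_coordinates[OF assms(3-5), of _ d, folded \<mu>_def m_def]
  have "(\<integral>\<theta>. (\<Sum>i<d. \<theta> i * r i)\<^sup>2 \<partial>?P) = (\<integral>\<theta>. (\<Sum>i<d. \<Sum>j<d. r i * r j * (\<theta> i * \<theta> j)) \<partial>?P)"
    by (simp add: power2_eq_square sum_product algebra_simps)
  also have "\<dots> = (\<Sum>i<d. \<integral>\<theta>. (\<Sum>j<d. r i * r j * (\<theta> i * \<theta> j)) \<partial>?P)"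
    by (rule Bochner_Integration.integral_sum) (auto intro!: integrable_sum moments(1))
  also have "\<dots> = (\<Sum>i<d. \<Sum>j<d. r i * r j * (\<integral>\<theta>. \<theta> i * \<theta> j \<partial>?P))"
    by (intro sum.cong refl, subst Bochner_Integration.integral_sum) (auto intro!: moments(1))
  also have "\<dots> = (\<Sum>i<d. \<Sum>j<d. r i * r j * \<mu>\<^sup>2 + (if i = j then (m - \<mu>\<^sup>2) * (r i)\<^sup>2 else 0))"
    by (intro sum.cong refl) (simp add: moments(2) power2_eq_square algebra_simps)
  also have "\<dots> = \<mu>\<^sup>2 * (\<Sum>i<d. \<Sum>j<d. r i * r j) + (m - \<mu>\<^sup>2) * (\<Sum>i<d. (r i)\<^sup>2)"
    by (simp add: sum.distrib sum_distrib_left mult_ac)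
  also have "\<dots> = (m - \<mu>\<^sup>2) * (\<Sum>i<d. (r i)\<^sup>2) + \<mu>\<^sup>2 * (\<Sum>i<d. r i)\<^sup>2"
    by (simp add: power2_eq_square sum_product)
  finally show ?thesis .
qed

lemma uniform_01_moments:
  shows "integrable (uniform_measure lborel {0..1}) (\<lambda>x::real. x ^ k)"
    and "(\<integral>x. x ^ k \<partial>uniform_measure lborel {0..1::real}) = 1 / real (Suc k)"
proof -
  have density: "uniform_measure lborel {0..1::real} = density lborel (\<lambda>x. ennreal (indicator {0..1} x))"
    unfolding uniform_measure_def by (simp add: ennreal_indicator divide_ennreal_def)
  have "integrable lborel (\<lambda>x::real. x ^ k * indicator {0..1} x)"
    by (rule borel_integrable_atLeastAtMost) auto
  then show "integrable (uniform_measure lborel {0..1}) (\<lambda>x::real. x ^ k)"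
    unfolding density by (subst integrable_density) (auto simp: mult.commute)
  have "(\<integral>x. x ^ k \<partial>uniform_measure lborel {0..1::real}) = (\<integral>x. x ^ k * indicator {0..1::real} x \<partial>lborel)"
    unfolding density by (subst integral_density) (auto simp: mult.commute)
  also have "\<dots> = 1 / real (Suc k)"
    by (subst integral_power) auto
  finally show "(\<integral>x. x ^ k \<partial>uniform_measure lborel {0..1::real}) = 1 / real (Suc k)" .
qed

lemma integral_theta_measure_square:
  assumes "r \<in> carrier_vec d"
  shows "(\<integral>\<theta>. (scalar_prod (vec d \<theta>) r)\<^sup>2 \<partial>theta_measure d)
     = scalar_prod r r / 12 + (scalar_prod r (vec d (\<lambda>_. 1)))\<^sup>2 / 4"
proof -
  let ?U = "uniform_measure lborel {0..1::real}"
  have U: "prob_space ?U" by (rule prob_space_uniform_measure) auto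
  have mean: "(\<integral>x. x \<partial>?U) = 1/2" and square: "(\<integral>x. x\<^sup>2 \<partial>?U) = 1/3"
    using uniform_01_moments(2)[of 1] uniform_01_moments(2)[of 2] by simp_all
  have "(\<integral>\<theta>. (scalar_prod (vec d \<theta>) r)\<^sup>2 \<partial>theta_measure d) = (\<integral>\<theta>. (\<Sum>i<d. \<theta> i * r $ i)\<^sup>2 \<partial>theta_measure d)"
    using assms by (simp add: scalar_prod_def lessThan_atLeast0)
  also have "\<dots> = 1/12 * (\<Sum>i<d. (r $ i)\<^sup>2) + 1/4 * (\<Sum>i<d. r $ i)\<^sup>2"
    using integral_PiM_square_linear_form[OF U, of d "\<lambda>i. r $ i"] uniform_01_moments(1)[of 1] uniform_01_moments(1)[of 2]
    unfolding theta_measure_def mean square by (simp add: power2_eq_square)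
  also have "\<dots> = scalar_prod r r / 12 + (scalar_prod r (vec d (\<lambda>_. 1)))\<^sup>2 / 4"
    using assms by (simp add: scalar_prod_def lessThan_atLeast0 power2_eq_square)
  finally show ?thesis .
qed

lemma indvec_carrier [simp]: "indvec d S \<in> carrier_vec d"
  unfolding indvec_def by simp

lemma dim_vec_indvec [simp]: "dim_vec (indvec d S) = d"
  unfolding indvec_def by simp

lemma indvec_index: "i < d \<Longrightarrow> indvec d S $ i = (if Suc i \<in> S then 1 else 0)"
  unfolding indvec_def by simp

lemma indvec_all: "indvec d {1..d} = vec d (\<lambda>_. 1)"
  by (rule eq_vecI) (auto simp: indvec_index)

lemma card_Suc_preimage:
  assumes "S \<subseteq> {1..d}"
  shows "card {i \<in> {..<d}. Suc i \<in> S} = card S"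
proof -
  have "Suc ` {i \<in> {..<d}. Suc i \<in> S} = S"
  proof (intro equalityI subsetI)
    fix x assume "x \<in> S"
    with assms have "x \<in> {1..d}" by blast
    then have "x = Suc (x - 1)" "x - 1 < d" by auto
    with \<open>x \<in> S\<close> show "x \<in> Suc ` {i \<in> {..<d}. Suc i \<in> S}" by force
  qed auto
  then show ?thesis
    by (metis card_image inj_Suc)
qed

lemma scalar_prod_indvec:
  assumes "A \<subseteq> {1..d}"
  shows "scalar_prod (indvec d A) (indvec d B) = real (card (A \<inter> B))"
proof -
  have "scalar_prod (indvec d A) (indvec d B) = (\<Sum>i<d. if Suc i \<in> A \<inter> B then 1 else 0)"
    unfolding scalar_prod_def by (intro sum.cong) (auto simp: indvec_index lessThan_atLeast0)
  also have "\<dots> = real (card {i \<in> {..<d}. Suc i \<in> A \<inter> B})"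
    by (simp add: sum.If_cases Int_def)
  also have "\<dots> = real (card (A \<inter> B))"
    using assms by (subst card_Suc_preimage) auto
  finally show ?thesis .
qed

lemma indvec_eq_iff:
  assumes "A \<subseteq> {1..d}" "B \<subseteq> {1..d}"
  shows "indvec d A = indvec d B \<longleftrightarrow> A = B"
proof
  assume eq: "indvec d A = indvec d B"
  have "x \<in> A \<longleftrightarrow> x \<in> B" if "x \<in> {1..d}" for x
    using arg_cong[OF eq, of "\<lambda>v. v $ (x - 1)"] that by (auto simp: indvec_index split: if_splits)
  then show "A = B" using assms by blast
qed simp

lemma Sim_indvec:
  assumes "A \<subseteq> {1..d}" "B \<subseteq> {1..d}" "card A = n" "card B = n"
  shows "Sim (indvec d A) (indvec d B) = real (card (A \<inter> B)) / real n"
  using assms by (simp add: Sim_def vnorm_def scalar_prod_indvec)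

lemma expected_pred_loss_indicator_pair:
  fixes n m c s :: real
  assumes sets: "A \<subseteq> {1..d}" "B \<subseteq> {1..d}" "Q \<subseteq> {1..d}"
    and sizes: "card A = n" "card B = n" "card Q = m"
    and overlap: "card (A \<inter> B) = c" "c < n"
    and query: "card (Q \<inter> A) = s" "card (Q \<inter> B) = s"
  shows "(\<integral>\<theta>. pred_loss d [indvec d A, indvec d B] (vec d \<theta>) (indvec d Q) \<partial>theta_measure d)
     = (m - 2 * s\<^sup>2 / (n + c)) / 12 + (m - 2 * s * n / (n + c))\<^sup>2 / 4"
proof -
  let ?a = "indvec d A" and ?b = "indvec d B" and ?q = "indvec d Q" and ?u = "vec d (\<lambda>_. 1)"
  define t where "t = s / (n + c)"
  define r where "r = ?q - t \<cdot>\<^sub>v (?a + ?b)"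
  have r: "r \<in> carrier_vec d" unfolding r_def by simp
  have products:
    "scalar_prod ?a ?a = n" "scalar_prod ?b ?b = n" "scalar_prod ?a ?b = c" "scalar_prod ?b ?a = c"
    "scalar_prod ?q ?q = m" "scalar_prod ?a ?q = s" "scalar_prod ?b ?q = s" "scalar_prod ?q ?a = s"
    "scalar_prod ?q ?b = s" "scalar_prod ?a ?u = n" "scalar_prod ?b ?u = n" "scalar_prod ?q ?u = m"
    unfolding indvec_all[symmetric] using sets sizes overlap query
    by (simp_all add: scalar_prod_indvec Int_commute Int_absorb2)
  have "n + c > 0" using overlap of_nat_0_le_iff by (metis add_pos_nonneg le_less_trans)
  then have t: "t * (n + c) = s" unfolding t_def by simp
  have "pred_loss d [?a, ?b] (vec d \<theta>) ?q = (scalar_prod (vec d \<theta>) r)\<^sup>2" for \<theta>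
    unfolding r_def t_def using overlap of_nat_0_le_iff[of "card (A \<inter> B)"]
    by (intro pred_loss_two_rows) (simp_all add: products)
  then have "(\<integral>\<theta>. pred_loss d [?a, ?b] (vec d \<theta>) ?q \<partial>theta_measure d)
      = scalar_prod r r / 12 + (scalar_prod r ?u)\<^sup>2 / 4"
    using integral_theta_measure_square[OF r] by simp
  also have "scalar_prod r r = m - 4 * t * s + t\<^sup>2 * (2 * n + 2 * c)"
    unfolding r_def
    by (simp add: scalar_prod_minus_distrib[where n = d] minus_scalar_prod_distrib[where n = d]
        scalar_prod_add_distrib[where n = d] add_scalar_prod_distrib[where n = d]
        scalar_prod_smult_distrib[where n = d] smult_scalar_prod_distrib[where n = d] products
        power2_eq_square algebra_simps)
  also have "\<dots> = m - 4 * t * s + 2 * t * (t * (n + c))"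
    by (simp add: power2_eq_square algebra_simps)
  also have "\<dots> = m - 2 * s\<^sup>2 / (n + c)"
    unfolding t t_def by (simp add: power2_eq_square)
  also have "scalar_prod r ?u = m - 2 * s * n / (n + c)"
    unfolding r_def t_def
    by (simp add: minus_scalar_prod_distrib[where n = d] add_scalar_prod_distrib[where n = d]
        smult_scalar_prod_distrib[where n = d] products)
  finally show ?thesis .
qed

lemma expectation_pmf_const:
  assumes "\<And>x. x \<in> set_pmf p \<Longrightarrow> f x = (c::real)"
  shows "measure_pmf.expectation p f = c"
proof -
  have "measure_pmf.expectation p f = measure_pmf.expectation p (\<lambda>_. c)"
    by (intro integral_cong_AE) (auto intro!: AE_pmfI assms)
  then show ?thesis by simp
qed

lemma expectation_pmf_gt:
  assumes fin: "finite (set_pmf p)" and ge: "\<And>x. x \<in> set_pmf p \<Longrightarrow> c \<le> f x"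
    and x0: "x0 \<in> set_pmf p" and gt: "c < f x0"
  shows "c < measure_pmf.expectation p (f :: _ \<Rightarrow> real)"
proof -
  have "c = (\<Sum>x\<in>set_pmf p. c * pmf p x)"
    using sum_pmf_eq_1[OF fin order.refl] by (simp add: sum_distrib_left[symmetric])
  also have "\<dots> < (\<Sum>x\<in>set_pmf p. f x * pmf p x)"
    using fin ge x0 gt by (intro sum_strict_mono_ex1) (auto simp: pmf_positive intro!: mult_right_mono)
  also have "\<dots> = measure_pmf.expectation p f"
    using fin by (intro integral_measure_pmf_real[symmetric]) auto
  finally show ?thesis .
qed

lemma set_pmf_of_argmax:
  fixes f :: "'a \<Rightarrow> real"
  assumes "finite A" "A \<noteq> {}"
  shows "set_pmf (pmf_of_set {e \<in> A. \<forall>e'\<in>A. f e' \<le> f e}) = {e \<in> A. \<forall>e'\<in>A. f e' \<le> f e}"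
proof (rule set_pmf_of_set)
  have "Max (f ` A) \<in> f ` A" using assms by simp
  then obtain e where "e \<in> A" "f e = Max (f ` A)" by auto
  then show "{e \<in> A. \<forall>e'\<in>A. f e' \<le> f e} \<noteq> {}"
    using assms by auto
qed (use assms in auto)

lemma set_pmf_topkdiv_sel_two:
  assumes D: "finite D" and two: "x' \<in> D" "y' \<in> D" "x' \<noteq> y'"
    and xs: "xs \<in> set_pmf (topkdiv_sel \<alpha> D 2 q)"
  obtains x y where "xs = [x, y]" "x \<in> D" "\<And>e. e \<in> D \<Longrightarrow> div_score \<alpha> q {} e \<le> div_score \<alpha> q {} x"
    "y \<in> D - {x}" "\<And>e. e \<in> D - {x} \<Longrightarrow> div_score \<alpha> q {x} e \<le> div_score \<alpha> q {x} y"
proof -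
  have "xs \<in> set_pmf (topkdiv_sel \<alpha> D (Suc (Suc 0)) q)"
    using xs by (simp add: numeral_2_eq_2)
  then obtain x y where "xs = [x, y]"
    and x: "x \<in> set_pmf (pmf_of_set {e \<in> D. \<forall>e'\<in>D. div_score \<alpha> q {} e' \<le> div_score \<alpha> q {} e})"
    and y: "y \<in> set_pmf (pmf_of_set {e \<in> D - {x}. \<forall>e'\<in>D - {x}. div_score \<alpha> q {x} e' \<le> div_score \<alpha> q {x} e})"
    by auto
  moreover have "D \<noteq> {}" "D - {x} \<noteq> {}" using two by auto
  ultimately show ?thesis
    using that x y unfolding set_pmf_of_argmax[OF D \<open>D \<noteq> {}\<close>]
      set_pmf_of_argmax[OF finite_Diff[OF D] \<open>D - {x} \<noteq> {}\<close>] by blast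
qed

definition topk_sets :: "real vec set \<Rightarrow> nat \<Rightarrow> real vec \<Rightarrow> real vec list set" where
  "topk_sets D K q = {xs. distinct xs \<and> length xs = K \<and> set xs \<subseteq> D \<and>
       (\<forall>x\<in>set xs. \<forall>y\<in>D - set xs. Sim y q \<le> Sim x q)}"

lemma topk_sel_eq: "topk_sel D K q = pmf_of_set (topk_sets D K q)"
  unfolding topk_sel_def topk_sets_def ..

lemma finite_topk_sets: "finite D \<Longrightarrow> finite (topk_sets D K q)"
  unfolding topk_sets_def
  by (rule finite_subset[OF _ finite_lists_length_eq[of D K]]) auto

lemma topk_sets_maximizers:
  assumes xs: "xs \<in> topk_sets D K q" and x: "x \<in> set xs"
    and bound: "\<And>y. y \<in> D \<Longrightarrow> Sim y q \<le> M" and many: "K < card {y \<in> D. Sim y q = M}"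
  shows "Sim x q = M"
proof -
  have "card (set xs) = K" using xs unfolding topk_sets_def by (auto simp: distinct_card)
  then have "\<not> {y \<in> D. Sim y q = M} \<subseteq> set xs"
    using many card_mono[of "set xs" "{y \<in> D. Sim y q = M}"] by auto
  then obtain y where "y \<in> D - set xs" "Sim y q = M" by auto
  moreover have "x \<in> D" "Sim y q \<le> Sim x q"
    using xs x \<open>y \<in> D - set xs\<close> unfolding topk_sets_def by auto
  ultimately show ?thesis
    using bound[of x] by linarith
qed

lemma div_score_empty: "div_score \<alpha> q {} e = \<alpha> * Sim e q"
  unfolding div_score_def Div_def by simp

lemma div_score_singleton: "div_score \<alpha> q {x} e = \<alpha> * Sim e q + (1 - \<alpha>) * (1 - Sim e x)"
  unfolding div_score_def Div_def by simp

definition demo_index :: "nat \<Rightarrow> nat set \<Rightarrow> nat \<Rightarrow> bool" where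
  "demo_index l T1 j \<longleftrightarrow> T1 \<subseteq> {1..2 * l} \<and> card T1 = l - 1 \<and> j \<in> {2 * l + 1..4 * l}"

abbreviation demo_vec :: "nat \<Rightarrow> nat set \<Rightarrow> nat \<Rightarrow> real vec" where
  "demo_vec l T1 j \<equiv> indvec (4 * l) (insert j T1)"

lemma demo_set_eq: "demo_set l = {demo_vec l T1 j | T1 j. demo_index l T1 j}"
proof (intro equalityI subsetI)
  fix e assume "e \<in> demo_set l"
  then obtain T1 T2 where e: "e = indvec (4 * l) (T1 \<union> T2)" and T1: "T1 \<subseteq> {1..2 * l}" "card T1 = l - 1"
    and T2: "T2 \<subseteq> {2 * l + 1..4 * l}" "card T2 = 1"
    unfolding demo_set_def by blast
  from T2 obtain j where "T2 = {j}" "j \<in> {2 * l + 1..4 * l}" by (auto simp: card_1_singleton_iff)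
  with e T1 show "e \<in> {demo_vec l T1 j | T1 j. demo_index l T1 j}"
    unfolding demo_index_def by auto
next
  fix e assume "e \<in> {demo_vec l T1 j | T1 j. demo_index l T1 j}"
  then obtain T1 j where "e = indvec (4 * l) (T1 \<union> {j})" "demo_index l T1 j" by auto
  then show "e \<in> demo_set l"
    unfolding demo_set_def demo_index_def by fastforce
qed

lemma demo_vec_in_demo_set: "demo_index l T1 j \<Longrightarrow> demo_vec l T1 j \<in> demo_set l"
  unfolding demo_set_eq by blast

lemma finite_demo_set: "finite (demo_set l)"
proof -
  have "demo_set l \<subseteq> (\<lambda>(T1, j). demo_vec l T1 j) ` (Pow {1..2 * l} \<times> {2 * l + 1..4 * l})"
    unfolding demo_set_eq demo_index_def by auto
  then show ?thesis by (rule finite_subset) auto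
qed

lemma demo_index_subset: "demo_index l T1 j \<Longrightarrow> insert j T1 \<subseteq> {1..4 * l}"
  unfolding demo_index_def by auto

lemma demo_index_split:
  assumes "demo_index l T1 j"
  shows "insert j T1 \<inter> {1..2 * l} = T1" and "insert j T1 - {1..2 * l} = {j}"
  using assms unfolding demo_index_def by auto

lemma demo_index_finite: "demo_index l T1 j \<Longrightarrow> finite T1"
  unfolding demo_index_def by (auto intro: finite_subset)

lemma demo_index_notin: "demo_index l T1 j \<Longrightarrow> j \<notin> T1"
  unfolding demo_index_def by force

lemma demo_index_card: "demo_index l T1 j \<Longrightarrow> 1 \<le> l \<Longrightarrow> card (insert j T1) = l"
  using demo_index_finite[of l T1 j] demo_index_notin[of l T1 j] unfolding demo_index_def by simp

lemma card_demo_overlap: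
  assumes "demo_index l T1 j" "demo_index l T1' j'"
  shows "card (insert j T1 \<inter> insert j' T1') = card (T1 \<inter> T1') + (if j = j' then 1 else 0)"
proof -
  have "insert j T1 \<inter> insert j' T1' = (if j = j' then insert j (T1 \<inter> T1') else T1 \<inter> T1')"
    using assms unfolding demo_index_def by auto
  then show ?thesis
    using demo_index_finite[OF assms(1)] demo_index_notin[OF assms(1)] by (cases "j = j'") simp_all
qed

lemma demo_vec_eq_iff:
  assumes "demo_index l T1 j" "demo_index l T1' j'"
  shows "demo_vec l T1 j = demo_vec l T1' j' \<longleftrightarrow> T1 = T1' \<and> j = j'"
proof -
  have "demo_vec l T1 j = demo_vec l T1' j' \<longleftrightarrow> insert j T1 = insert j' T1'"
    using assms by (intro indvec_eq_iff demo_index_subset)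
  also have "\<dots> \<longleftrightarrow> T1 = T1' \<and> j = j'"
    using demo_index_split[OF assms(1)] demo_index_split[OF assms(2)] by (metis singleton_inject)
  finally show ?thesis .
qed

lemma Sim_demo_demo:
  assumes "demo_index l T1 j" "demo_index l T1' j'" "1 \<le> l"
  shows "Sim (demo_vec l T1 j) (demo_vec l T1' j') = real (card (T1 \<inter> T1') + (if j = j' then 1 else 0)) / real l"
  using Sim_indvec[OF demo_index_subset[OF assms(1)] demo_index_subset[OF assms(2)]
      demo_index_card[OF assms(1,3)] demo_index_card[OF assms(2,3)]]
  by (simp add: card_demo_overlap[OF assms(1,2)])

definition theta_loss :: "nat \<Rightarrow> real vec list \<Rightarrow> real vec \<Rightarrow> real" where
  "theta_loss d xs q = (\<integral>\<theta>. pred_loss d xs (vec d \<theta>) q \<partial>theta_measure d)"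

lemma expected_loss_eq:
  "expected_loss d Q sel =
     measure_pmf.expectation Q (\<lambda>q. measure_pmf.expectation (sel q) (\<lambda>xs. theta_loss d xs q))"
  unfolding expected_loss_def theta_loss_def ..

lemma diverse_pair_loss_value:
  fixes L :: real
  assumes "1 < L"
  shows "(L - 2 * (L - 1)\<^sup>2 / (L + (L - 2))) / 12 + (L - 2 * (L - 1) * L / (L + (L - 2)))\<^sup>2 / 4 = 1 / 12"
proof -
  have "2 * (L - 1)\<^sup>2 / (L + (L - 2)) = L - 1" "2 * (L - 1) * L / (L + (L - 2)) = L"
    using assms by (simp_all add: field_simps power2_eq_square)
  then show ?thesis by simp
qed

lemma redundant_pair_loss_value:
  fixes L :: real
  assumes "1 < L"
  shows "1 / 12 < (L - 2 * (L - 1)\<^sup>2 / (L + (L - 1))) / 12 + (L - 2 * (L - 1) * L / (L + (L - 1)))\<^sup>2 / 4"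
proof -
  have "2 * (L - 1)\<^sup>2 / (L + (L - 1)) < L - 1"
    using assms by (simp add: field_simps power2_eq_square)
  then have "1 / 12 < (L - 2 * (L - 1)\<^sup>2 / (L + (L - 1))) / 12" by simp
  moreover have "0 \<le> (L - 2 * (L - 1) * L / (L + (L - 1)))\<^sup>2 / 4" by simp
  ultimately show ?thesis by linarith
qed

(* Second TopK-Div step, scores as in div_score_singleton: k and m + \<delta> are the overlaps of a
  candidate with the query and with the first pick (\<delta> = 1 iff the upper coordinates agree); the left
  side is the score of a near demonstration overlapping the first pick in l - 2 coordinates. *)
lemma diversity_score_maximal:
  fixes k m \<delta> l :: nat and \<alpha> :: real
  assumes \<alpha>: "1 / 2 < \<alpha>" "\<alpha> < 1"
    and bounds: "k \<le> l - 1" "m \<le> k" "k \<le> m + 1" "\<delta> \<le> 1" "1 \<le> l"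
    and score: "\<alpha> * ((real l - 1) / l) + (1 - \<alpha>) * (1 - (real l - 2) / l)
      \<le> \<alpha> * (k / l) + (1 - \<alpha>) * (1 - (m + \<delta>) / l)"
  shows "k = l - 1" "m = l - 2" "\<delta> = 0"
proof -
  have scale: "real l * (\<alpha> * (a / l) + (1 - \<alpha>) * (1 - b / l)) = \<alpha> * a + (1 - \<alpha>) * (real l - b)"
    for a b :: real
    using bounds by (simp add: field_simps)
  have "\<alpha> * (real l - 1) + (1 - \<alpha>) * (real l - (real l - 2)) \<le> \<alpha> * k + (1 - \<alpha>) * (real l - (m + \<delta>))"
    using mult_left_mono[OF score, of "real l"] unfolding scale by simp
  then have "0 \<le> (2 * \<alpha> - 1) * (real k - (real l - 1)) - (1 - \<alpha>) * \<delta> - (1 - \<alpha>) * (real m + 1 - real k)"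
    by (simp add: algebra_simps)
  moreover have "(2 * \<alpha> - 1) * (real k - (real l - 1)) \<le> 0"
    using \<alpha> bounds by (intro mult_nonneg_nonpos) auto
  moreover have "0 \<le> (1 - \<alpha>) * \<delta>" "0 \<le> (1 - \<alpha>) * (real m + 1 - real k)"
    using \<alpha> bounds by auto
  ultimately have "(2 * \<alpha> - 1) * (real k - (real l - 1)) = 0"
    "(1 - \<alpha>) * \<delta> = 0" "(1 - \<alpha>) * (real m + 1 - real k) = 0"
    by linarith+
  then show "k = l - 1" "m = l - 2" "\<delta> = 0"
    using \<alpha> bounds by auto
qed

context
  fixes l :: nat and T :: "nat set"
  assumes l_ge_3: "3 \<le> l" and query: "T \<subseteq> {1..2 * l}" "card T = l"
begin

lemma finite_query: "finite T"
  using query by (auto intro: finite_subset)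

lemma query_subset: "T \<subseteq> {1..4 * l}"
  using query by auto

lemma Sim_demo_query:
  assumes "demo_index l T1 j"
  shows "Sim (demo_vec l T1 j) (indvec (4 * l) T) = card (T1 \<inter> T) / real l"
proof -
  have "insert j T1 \<inter> T = T1 \<inter> T"
    using assms query unfolding demo_index_def by auto
  then show ?thesis
    using Sim_indvec[OF demo_index_subset[OF assms] query_subset] assms query l_ge_3 by (simp add: demo_index_card)
qed

lemma Sim_demo_query_le:
  assumes "demo_index l T1 j"
  shows "Sim (demo_vec l T1 j) (indvec (4 * l) T) \<le> (real l - 1) / real l"
proof -
  have "card (T1 \<inter> T) \<le> l - 1"
    using assms card_mono[of T1 "T1 \<inter> T"] demo_index_finite[OF assms] unfolding demo_index_def by auto
  then show ?thesis
    using l_ge_3 by (simp add: Sim_demo_query[OF assms] divide_right_mono)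
qed

lemma Sim_demo_query_max_iff:
  assumes "demo_index l T1 j"
  shows "(real l - 1) / real l \<le> Sim (demo_vec l T1 j) (indvec (4 * l) T) \<longleftrightarrow> T1 \<subseteq> T"
proof -
  have fin: "finite T1" and card: "card T1 = l - 1"
    using assms demo_index_finite unfolding demo_index_def by auto
  have "(real l - 1) / real l \<le> card (T1 \<inter> T) / real l \<longleftrightarrow> real (l - 1) \<le> card (T1 \<inter> T)"
    using l_ge_3 by (simp add: divide_le_cancel of_nat_diff)
  also have "\<dots> \<longleftrightarrow> l - 1 \<le> card (T1 \<inter> T)"
    by (rule of_nat_le_iff)
  also have "\<dots> \<longleftrightarrow> T1 \<subseteq> T"
  proof
    assume "l - 1 \<le> card (T1 \<inter> T)"
    then have "card (T1 \<inter> T) = card T1"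
      using card card_mono[OF fin, of "T1 \<inter> T"] by auto
    then have "T1 \<inter> T = T1"
      using card_subset_eq[OF fin, of "T1 \<inter> T"] by blast
    then show "T1 \<subseteq> T" by blast
  next
    assume "T1 \<subseteq> T"
    then show "l - 1 \<le> card (T1 \<inter> T)" using card by (simp add: Int_absorb2)
  qed
  finally show ?thesis
    by (simp add: Sim_demo_query[OF assms])
qed

lemma near_demo_index:
  "t \<in> T \<Longrightarrow> j \<in> {2 * l + 1..4 * l} \<Longrightarrow> demo_index l (T - {t}) j"
  using query finite_query unfolding demo_index_def by auto

lemma near_demo_maximal:
  "t \<in> T \<Longrightarrow> j \<in> {2 * l + 1..4 * l} \<Longrightarrow> Sim (demo_vec l (T - {t}) j) (indvec (4 * l) T) = (real l - 1) / real l"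
  using Sim_demo_query_max_iff[OF near_demo_index] Sim_demo_query_le[OF near_demo_index] by force

lemma card_near_overlap:
  assumes ij: "demo_index l T1 j" "demo_index l T1' j'" and near: "T1 \<subseteq> T" "T1' \<subseteq> T"
    and ne: "(T1, j) \<noteq> (T1', j')"
  shows "card (insert j T1 \<inter> insert j' T1') = (if T1 \<noteq> T1' \<and> j \<noteq> j' then l - 2 else l - 1)"
proof (cases "T1 = T1'")
  case True
  then show ?thesis
    using ne ij card_demo_overlap[OF ij] unfolding demo_index_def by auto
next
  case False
  have fin: "finite T1" "finite T1'" and card: "card T1 = l - 1" "card T1' = l - 1"
    using ij demo_index_finite unfolding demo_index_def by auto
  have "T1 \<subset> T1 \<union> T1'"
    using False fin card card_subset_eq[of T1 T1'] by auto
  then have "card T1 < card (T1 \<union> T1')"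
    using fin by (intro psubset_card_mono) auto
  moreover have "card (T1 \<union> T1') \<le> l"
    using near query finite_query card_mono[of T "T1 \<union> T1'"] by auto
  ultimately have "card (T1 \<union> T1') = l"
    using card l_ge_3 by linarith
  then have "card (T1 \<inter> T1') = l - 2"
    using card_Un_Int[OF fin] card by simp
  then show ?thesis
    using False card_demo_overlap[OF ij] l_ge_3 by auto
qed

lemma theta_loss_near_pair:
  assumes ij: "demo_index l T1 j" "demo_index l T1' j'" and near: "T1 \<subseteq> T" "T1' \<subseteq> T"
    and overlap: "card (insert j T1 \<inter> insert j' T1') = c" "c < l"
  shows "theta_loss (4 * l) [demo_vec l T1 j, demo_vec l T1' j'] (indvec (4 * l) T)
     = (real l - 2 * (real l - 1)\<^sup>2 / (real l + real c)) / 12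
       + (real l - 2 * (real l - 1) * real l / (real l + real c))\<^sup>2 / 4"
proof -
  have "insert j T1 \<inter> T = T1" "insert j' T1' \<inter> T = T1'"
    using ij near query unfolding demo_index_def by auto
  then have "card (T \<inter> insert j T1) = real l - 1" "card (T \<inter> insert j' T1') = real l - 1"
    using ij l_ge_3 unfolding demo_index_def by (auto simp: Int_commute of_nat_diff)
  then show ?thesis
    unfolding theta_loss_def using l_ge_3 query overlap
    by (intro expected_pred_loss_indicator_pair demo_index_subset ij) (auto simp: demo_index_card[OF ij(1)] demo_index_card[OF ij(2)])
qed

lemma theta_loss_diverse_pair:
  assumes ij: "demo_index l T1 j" "demo_index l T1' j'" and near: "T1 \<subseteq> T" "T1' \<subseteq> T"
    and diverse: "T1 \<noteq> T1'" "j \<noteq> j'"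
  shows "theta_loss (4 * l) [demo_vec l T1 j, demo_vec l T1' j'] (indvec (4 * l) T) = 1 / 12"
proof -
  have "card (insert j T1 \<inter> insert j' T1') = l - 2"
    using card_near_overlap[OF ij near] diverse by simp
  then show ?thesis
    using theta_loss_near_pair[OF ij near, of "l - 2"] diverse_pair_loss_value[of l] l_ge_3
    by (simp add: of_nat_diff)
qed

lemma theta_loss_redundant_pair:
  assumes ij: "demo_index l T1 j" "demo_index l T1' j'" and near: "T1 \<subseteq> T" "T1' \<subseteq> T"
    and ne: "(T1, j) \<noteq> (T1', j')" and redundant: "T1 = T1' \<or> j = j'"
  shows "1 / 12 < theta_loss (4 * l) [demo_vec l T1 j, demo_vec l T1' j'] (indvec (4 * l) T)"
proof -
  have "card (insert j T1 \<inter> insert j' T1') = l - 1"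
    using card_near_overlap[OF ij near ne] redundant by auto
  then show ?thesis
    using theta_loss_near_pair[OF ij near, of "l - 1"] redundant_pair_loss_value[of l] l_ge_3
    by (simp add: of_nat_diff)
qed

lemma card_near_maximizers:
  "2 < card {e \<in> demo_set l. Sim e (indvec (4 * l) T) = (real l - 1) / real l}"
proof -
  obtain t where t: "t \<in> T" using query l_ge_3 by fastforce
  let ?w = "\<lambda>k. demo_vec l (T - {t}) (2 * l + k)"
  have idx: "demo_index l (T - {t}) (2 * l + k)" if "k \<in> {1, 2, 3}" for k
    using that l_ge_3 by (intro near_demo_index[OF t]) auto
  have "?w ` {1, 2, 3} \<subseteq> {e \<in> demo_set l. Sim e (indvec (4 * l) T) = (real l - 1) / real l}"
  proof (intro image_subsetI CollectI conjI)
    fix k :: nat assume "k \<in> {1, 2, 3}"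
    then show "?w k \<in> demo_set l" "Sim (?w k) (indvec (4 * l) T) = (real l - 1) / real l"
      using idx l_ge_3 t by (auto intro: demo_vec_in_demo_set near_demo_maximal)
  qed
  then have "card (?w ` {1, 2, 3}) \<le> card {e \<in> demo_set l. Sim e (indvec (4 * l) T) = (real l - 1) / real l}"
    using finite_demo_set by (intro card_mono) auto
  moreover have "inj_on ?w {1, 2, 3}"
    by (rule inj_onI) (use idx demo_vec_eq_iff in force)
  then have "card (?w ` {1, 2, 3}) = 3" by (simp add: card_image)
  ultimately show ?thesis by linarith
qed

lemma Sim_query_le:
  "e \<in> demo_set l \<Longrightarrow> Sim e (indvec (4 * l) T) \<le> (real l - 1) / real l"
  unfolding demo_set_eq using Sim_demo_query_le by blast

lemma near_demo_of_maximal: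
  assumes "e \<in> demo_set l" "(real l - 1) / real l \<le> Sim e (indvec (4 * l) T)"
  obtains T1 j where "e = demo_vec l T1 j" "demo_index l T1 j" "T1 \<subseteq> T"
  using assms Sim_demo_query_max_iff unfolding demo_set_eq by blast

lemma topk_sets_near:
  assumes xs: "xs \<in> topk_sets (demo_set l) 2 (indvec (4 * l) T)"
  obtains T1 j T1' j' where "xs = [demo_vec l T1 j, demo_vec l T1' j']"
    "demo_index l T1 j" "demo_index l T1' j'" "T1 \<subseteq> T" "T1' \<subseteq> T" "(T1, j) \<noteq> (T1', j')"
proof -
  have near: "\<exists>T1 j. x = demo_vec l T1 j \<and> demo_index l T1 j \<and> T1 \<subseteq> T" if x: "x \<in> set xs" for x
  proof -
    have "x \<in> demo_set l" using xs x unfolding topk_sets_def by auto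
    moreover have "Sim x (indvec (4 * l) T) = (real l - 1) / real l"
      using topk_sets_maximizers[OF xs x _ card_near_maximizers] Sim_query_le by blast
    ultimately show ?thesis
      by (metis near_demo_of_maximal order_refl)
  qed
  obtain x y where xy: "xs = [x, y]" "x \<noteq> y"
    using xs unfolding topk_sets_def by (auto simp: numeral_2_eq_2 length_Suc_conv)
  obtain T1 j where "x = demo_vec l T1 j" "demo_index l T1 j" "T1 \<subseteq> T"
    using near[of x] xy(1) by auto
  moreover obtain T1' j' where "y = demo_vec l T1' j'" "demo_index l T1' j'" "T1' \<subseteq> T"
    using near[of y] xy(1) by auto
  ultimately show ?thesis
    using that xy by blast
qed

lemma expected_topk_loss:
  "1 / 12 < measure_pmf.expectation (topk_sel (demo_set l) 2 (indvec (4 * l) T))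
              (\<lambda>xs. theta_loss (4 * l) xs (indvec (4 * l) T))"
proof -
  let ?q = "indvec (4 * l) T" and ?D = "demo_set l"
  obtain t where t: "t \<in> T" using query l_ge_3 by fastforce
  have idx: "demo_index l (T - {t}) (2 * l + 1)" "demo_index l (T - {t}) (2 * l + 2)"
    using l_ge_3 by (auto intro: near_demo_index[OF t])
  let ?w = "[demo_vec l (T - {t}) (2 * l + 1), demo_vec l (T - {t}) (2 * l + 2)]"
  have "?w \<in> topk_sets ?D 2 ?q"
    unfolding topk_sets_def
    using idx l_ge_3 t demo_vec_eq_iff[OF idx] demo_vec_in_demo_set[OF idx(1)] demo_vec_in_demo_set[OF idx(2)]
    by (auto simp: near_demo_maximal Sim_query_le)
  then have support: "set_pmf (topk_sel ?D 2 ?q) = topk_sets ?D 2 ?q"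
    unfolding topk_sel_eq using finite_topk_sets[OF finite_demo_set] by (intro set_pmf_of_set) auto
  show ?thesis
  proof (rule expectation_pmf_gt)
    show "finite (set_pmf (topk_sel ?D 2 ?q))"
      unfolding support by (rule finite_topk_sets[OF finite_demo_set])
    show "1 / 12 \<le> theta_loss (4 * l) xs ?q" if "xs \<in> set_pmf (topk_sel ?D 2 ?q)" for xs
      using that unfolding support
      by (elim topk_sets_near) (metis order.strict_implies_order order_refl theta_loss_diverse_pair theta_loss_redundant_pair)
    show "?w \<in> set_pmf (topk_sel ?D 2 ?q)"
      unfolding support by fact
    show "1 / 12 < theta_loss (4 * l) ?w ?q"
      using idx by (intro theta_loss_redundant_pair) auto
  qed
qed

lemma topkdiv_first_near:
  assumes "0 < \<alpha>" and x: "x \<in> demo_set l"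
    and max: "\<And>e. e \<in> demo_set l \<Longrightarrow> div_score \<alpha> (indvec (4 * l) T) {} e \<le> div_score \<alpha> (indvec (4 * l) T) {} x"
  obtains T1 j where "x = demo_vec l T1 j" "demo_index l T1 j" "T1 \<subseteq> T"
proof -
  obtain t where t: "t \<in> T" using query l_ge_3 by fastforce
  have "2 * l + 1 \<in> {2 * l + 1..4 * l}" using l_ge_3 by simp
  note w = near_demo_index[OF t this] near_demo_maximal[OF t this]
  have "\<alpha> * ((real l - 1) / real l) \<le> \<alpha> * Sim x (indvec (4 * l) T)"
    using max[OF demo_vec_in_demo_set[OF w(1)]] w(2) by (simp add: div_score_empty)
  then have "(real l - 1) / real l \<le> Sim x (indvec (4 * l) T)"
    using \<open>0 < \<alpha>\<close> by (simp only: mult_le_cancel_left_pos)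
  then show ?thesis
    using near_demo_of_maximal[OF x] that by blast
qed

(* Replace an element of T1 by the element of T - T1 and change the upper coordinate: a near
  demonstration sharing only l - 2 coordinates with the first pick. *)
lemma diverse_competitor:
  assumes x: "demo_index l T1 j" "T1 \<subseteq> T"
  obtains c where "c \<in> demo_set l - {demo_vec l T1 j}" "Sim c (indvec (4 * l) T) = (real l - 1) / real l"
    "Sim c (demo_vec l T1 j) = (real l - 2) / real l"
proof -
  have "T1 \<noteq> {}" using x l_ge_3 unfolding demo_index_def by auto
  then obtain t where t: "t \<in> T1" by blast
  define j' where "j' = (if j = 2 * l + 1 then 2 * l + 2 else 2 * l + 1)"
  have j': "j' \<in> {2 * l + 1..4 * l}" "j' \<noteq> j" unfolding j'_def using l_ge_3 by auto
  have c: "demo_index l (T - {t}) j'" using near_demo_index[OF _ j'(1)] t x(2) by blast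
  have "(T - {t}) \<inter> T1 = T1 - {t}" using x(2) by auto
  then have "card ((T - {t}) \<inter> T1) = l - 2"
    using t demo_index_finite[OF x(1)] x(1) unfolding demo_index_def by simp
  then have "Sim (demo_vec l (T - {t}) j') (demo_vec l T1 j) = (real l - 2) / real l"
    using Sim_demo_demo[OF c x(1)] j'(2) l_ge_3 by (simp add: of_nat_diff)
  moreover have "demo_vec l (T - {t}) j' \<noteq> demo_vec l T1 j"
    using demo_vec_eq_iff[OF c x(1)] j'(2) by simp
  ultimately show ?thesis
    using that demo_vec_in_demo_set[OF c] near_demo_maximal[OF _ j'(1)] t x(2) by blast
qed

lemma near_overlap_bounds:
  assumes x: "demo_index l T1 j" "T1 \<subseteq> T" and y: "demo_index l T1' j'"
  shows "card (T1' \<inter> T) \<le> l - 1" "card (T1' \<inter> T1) \<le> card (T1' \<inter> T)"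
    "card (T1' \<inter> T) \<le> card (T1' \<inter> T1) + 1"
proof -
  have fin: "finite T1'" "finite T1" using x y demo_index_finite by blast+
  show "card (T1' \<inter> T) \<le> l - 1"
    using card_mono[OF fin(1), of "T1' \<inter> T"] y unfolding demo_index_def by simp
  show "card (T1' \<inter> T1) \<le> card (T1' \<inter> T)"
    using x fin by (intro card_mono) auto
  have "card (T - T1) = 1"
    using x query l_ge_3 finite_query by (simp add: card_Diff_subset demo_index_finite[OF x(1)] demo_index_def)
  moreover have "card (T1' \<inter> T) \<le> card ((T1' \<inter> T1) \<union> (T - T1))"
    using fin finite_query by (intro card_mono) auto
  moreover have "card ((T1' \<inter> T1) \<union> (T - T1)) \<le> card (T1' \<inter> T1) + card (T - T1)"
    by (rule card_Un_le)
  ultimately show "card (T1' \<inter> T) \<le> card (T1' \<inter> T1) + 1" by simp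
qed

lemma topkdiv_second_diverse:
  assumes \<alpha>: "1 / 2 < \<alpha>" "\<alpha> < 1" and x: "demo_index l T1 j" "T1 \<subseteq> T"
    and y: "y \<in> demo_set l - {demo_vec l T1 j}"
    and max: "\<And>e. e \<in> demo_set l - {demo_vec l T1 j} \<Longrightarrow>
      div_score \<alpha> (indvec (4 * l) T) {demo_vec l T1 j} e \<le> div_score \<alpha> (indvec (4 * l) T) {demo_vec l T1 j} y"
  obtains T1' j' where "y = demo_vec l T1' j'" "demo_index l T1' j'" "T1' \<subseteq> T" "T1' \<noteq> T1" "j' \<noteq> j"
proof -
  obtain T1' j' where y': "y = demo_vec l T1' j'" "demo_index l T1' j'"
    using y unfolding demo_set_eq by blast
  define k where "k = card (T1' \<inter> T)"
  define m where "m = card (T1' \<inter> T1)"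
  define \<delta> :: nat where "\<delta> = (if j' = j then 1 else 0)"
  obtain c where c: "c \<in> demo_set l - {demo_vec l T1 j}" "Sim c (indvec (4 * l) T) = (real l - 1) / real l"
    "Sim c (demo_vec l T1 j) = (real l - 2) / real l"
    using diverse_competitor[OF x] by blast
  have score: "\<alpha> * ((real l - 1) / l) + (1 - \<alpha>) * (1 - (real l - 2) / l)
      \<le> \<alpha> * (k / l) + (1 - \<alpha>) * (1 - (m + \<delta>) / l)"
    using max[OF c(1)] c(2,3) Sim_demo_query[OF y'(2)] Sim_demo_demo[OF y'(2) x(1)] l_ge_3
    unfolding y'(1) div_score_singleton k_def m_def \<delta>_def by (simp add: eq_commute[of j])
  have "\<delta> \<le> 1" "1 \<le> l" using l_ge_3 by (simp_all add: \<delta>_def)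
  then have "k = l - 1" "m = l - 2" "\<delta> = 0"
    using diversity_score_maximal[OF \<alpha> near_overlap_bounds[OF x y'(2), folded k_def m_def] _ _ score]
    by simp_all
  moreover have "T1' \<subseteq> T"
    using Sim_demo_query_max_iff[OF y'(2)] Sim_demo_query[OF y'(2)] \<open>k = l - 1\<close> l_ge_3
    unfolding k_def by (simp add: of_nat_diff)
  moreover have "T1' \<noteq> T1"
    using \<open>m = l - 2\<close> x(1) l_ge_3 unfolding m_def demo_index_def by auto
  ultimately show ?thesis
    using that y' unfolding \<delta>_def by (auto split: if_splits)
qed

lemma topkdiv_loss:
  assumes \<alpha>: "1 / 2 < \<alpha>" "\<alpha> < 1"
    and xs: "xs \<in> set_pmf (topkdiv_sel \<alpha> (demo_set l) 2 (indvec (4 * l) T))"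
  shows "theta_loss (4 * l) xs (indvec (4 * l) T) = 1 / 12"
proof -
  obtain t where t: "t \<in> T" using query l_ge_3 by fastforce
  have idx: "demo_index l (T - {t}) (2 * l + 1)" "demo_index l (T - {t}) (2 * l + 2)"
    using l_ge_3 by (auto intro: near_demo_index[OF t])
  obtain x y where x: "xs = [x, y]" "x \<in> demo_set l"
      "\<And>e. e \<in> demo_set l \<Longrightarrow> div_score \<alpha> (indvec (4 * l) T) {} e \<le> div_score \<alpha> (indvec (4 * l) T) {} x"
    and y: "y \<in> demo_set l - {x}"
      "\<And>e. e \<in> demo_set l - {x} \<Longrightarrow> div_score \<alpha> (indvec (4 * l) T) {x} e \<le> div_score \<alpha> (indvec (4 * l) T) {x} y"
    using set_pmf_topkdiv_sel_two[OF finite_demo_set demo_vec_in_demo_set[OF idx(1)]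
        demo_vec_in_demo_set[OF idx(2)] _ xs] demo_vec_eq_iff[OF idx]
    by auto
  have "0 < \<alpha>" using \<alpha> by simp
  obtain T1 j where T1: "x = demo_vec l T1 j" "demo_index l T1 j" "T1 \<subseteq> T"
    by (rule topkdiv_first_near[OF \<open>0 < \<alpha>\<close> x(2,3)])
  obtain T1' j' where "y = demo_vec l T1' j'" "demo_index l T1' j'" "T1' \<subseteq> T" "T1' \<noteq> T1" "j' \<noteq> j"
    using topkdiv_second_diverse[OF \<alpha> T1(2,3)] y unfolding T1(1) by blast
  then show ?thesis
    using theta_loss_diverse_pair[OF T1(2) _ T1(3)] x(1) T1(1) by auto
qed

end

lemma set_pmf_query_dist:
  "set_pmf (query_dist l) = indvec (4 * l) ` {T. T \<subseteq> {1..2 * l} \<and> card T = l}"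
proof -
  have "{1..l} \<in> {T. T \<subseteq> {1..2 * l} \<and> card T = l}" by auto
  then have "{T. T \<subseteq> {1..2 * l} \<and> card T = l} \<noteq> {}" by blast
  moreover have "finite {T. T \<subseteq> {1..2 * l} \<and> card T = l}"
    by (rule finite_subset[of _ "Pow {1..2 * l}"]) auto
  ultimately show ?thesis
    unfolding query_dist_def set_map_pmf by (simp add: set_pmf_of_set)
qed

theorem theorem2:
  fixes l :: nat and \<alpha> :: real
  assumes "l \<ge> 3" and "1 - 1 / real l \<le> \<alpha>" and "\<alpha> < 1"
  shows "expected_loss (4 * l) (query_dist l) (topk_sel (demo_set l) 2)
       > expected_loss (4 * l) (query_dist l) (topkdiv_sel \<alpha> (demo_set l) 2)"
proof -
  have "1 / real l \<le> 1 / 3" using assms(1) by (simp add: field_simps)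
  then have \<alpha>: "1 / 2 < \<alpha>" "\<alpha> < 1" using assms(2,3) by linarith+
  have "expected_loss (4 * l) (query_dist l) (topkdiv_sel \<alpha> (demo_set l) 2) = 1 / 12"
    unfolding expected_loss_eq
  proof (rule expectation_pmf_const)
    fix q assume "q \<in> set_pmf (query_dist l)"
    then obtain T where T: "q = indvec (4 * l) T" "T \<subseteq> {1..2 * l}" "card T = l"
      by (auto simp: set_pmf_query_dist)
    show "measure_pmf.expectation (topkdiv_sel \<alpha> (demo_set l) 2 q) (\<lambda>xs. theta_loss (4 * l) xs q) = 1 / 12"
      unfolding T(1) by (rule expectation_pmf_const) (rule topkdiv_loss[OF assms(1) T(2,3) \<alpha>])
  qed
  moreover have "1 / 12 < expected_loss (4 * l) (query_dist l) (topk_sel (demo_set l) 2)"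
    unfolding expected_loss_eq
  proof (rule expectation_pmf_gt)
    show "finite (set_pmf (query_dist l))"
      unfolding set_pmf_query_dist by (rule finite_imageI, rule finite_subset[of _ "Pow {1..2 * l}"]) auto
    show "indvec (4 * l) {1..l} \<in> set_pmf (query_dist l)"
      unfolding set_pmf_query_dist by auto
  qed (use expected_topk_loss[OF assms(1)] less_imp_le in \<open>auto simp: set_pmf_query_dist\<close>)
  ultimately show ?thesis by simp
qed

end
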